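(* Let $\mathcal T_{\mathcal I}$ be a cluster tree in which every non-leaf cluster has exactly two sons, and let $(V_t)_{t\in\mathcal T_{\mathcal I}}$ be a nested cluster basis of rank $k$ with transfer matrices $(E_t)$, i.e. $V_{t|\hat t'\times k}=V_{t'}E_{t'}$ for all $t'\in\mathrm{sons}(t)$. Let $(Q_t)_{t\in\mathcal T_{\mathcal I}}$ be constructed as follows: for leaves $t$, $Q_t\in\mathbb{R}^{\hat t\times k_t}$ is any matrix with orthonormal columns, and we set $\widehat Q_t:=Q_t$, $\widehat V_t:=V_t$; for a non-leaf $t$ with sons $t_1,t_2$, set $U_t:=\begin{pmatrix}Q_{t_1}&0\\0&Q_{t_2}\end{pmatrix}$, $\widehat V_t:=U_t^TV_t$, choose $\widehat Q_t\in\mathbb{R}^{(k_{t_1}+k_{t_2})\times k_t}$ with orthonormal columns, and set $Q_t:=U_t\widehat Q_t$. Let $t_0\in\mathcal T_{\mathcal I}$, $N\in\mathbb N$, and let $(M_r)_{r\in\mathrm{sons}^*(t_0)}$ be matrices $M_r\in\mathbb{R}^{k\times N}$ satisfying $M_{r'}=E_{r'}M_r$ for all $r\in\mathrm{sons}^*(t_0)$ and $r'\in\mathrm{sons}(r)$. Then $$\|Q_{t_0}Q_{t_0}^TV_{t_0}M_{t_0}-V_{t_0}M_{t_0}\|_F^2=\sum_{r\in\mathrm{sons}^*(t_0)}\|\widehat Q_r\widehat Q_r^T\widehat V_rM_r-\widehat V_rM_r\|_F^2.$$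
   Context: A cluster tree for a finite index set $\mathcal I$ is a tree whose nodes $t$ are labeled by subsets $\hat t\subseteq\mathcal I$, the root being labeled $\mathcal I$ and the labels of the sons of a non-leaf node forming a disjoint partition of its label. $\mathrm{sons}^*(t)$ denotes the set of descendants of $t$ including $t$ itself: $\mathrm{sons}^*(t)=\{t\}$ if $t$ is a leaf and $\{t\}\cup\bigcup_{t'\in\mathrm{sons}(t)}\mathrm{sons}^*(t')$ otherwise. $\|\cdot\|_F$ is the Frobenius norm. *)

theory Defs
  imports Complex_Main "HOL-Library.Sublist"
begin

text \<open>A node of the tree is its position: the list of left/right choices from the root.
  The tree is a finite, prefix-closed set T of positions; the label (cluster) of a node p
  is lab p.\<close>

definition sons :: "bool list set \<Rightarrow> bool list \<Rightarrow> bool list set" where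
  "sons T t = {s \<in> T. \<exists>b. s = t @ [b]}"

definition is_leaf :: "bool list set \<Rightarrow> bool list \<Rightarrow> bool" where
  "is_leaf T t \<longleftrightarrow> sons T t = {}"

inductive_set sons_star :: "bool list set \<Rightarrow> bool list \<Rightarrow> bool list set"
  for T :: "bool list set" and t :: "bool list" where
  self: "t \<in> sons_star T t"
| step: "s \<in> sons_star T t \<Longrightarrow> s' \<in> sons T s \<Longrightarrow> s' \<in> sons_star T t"

definition binary_cluster_tree :: "'i set \<Rightarrow> bool list set \<Rightarrow> (bool list \<Rightarrow> 'i set) \<Rightarrow> bool" where
  "binary_cluster_tree I T lab \<longleftrightarrow>
     finite I \<and> finite T \<and> [] \<in> T \<and> lab [] = I \<and>
     (\<forall>p b. p @ [b] \<in> T \<longrightarrow> p \<in> T) \<and>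
     (\<forall>p\<in>T. (p @ [False] \<in> T) = (p @ [True] \<in> T)) \<and>
     (\<forall>p\<in>T. p @ [False] \<in> T \<longrightarrow>
        lab p = lab (p @ [False]) \<union> lab (p @ [True]) \<and>
        lab (p @ [False]) \<inter> lab (p @ [True]) = {})"

text \<open>A matrix in R^{R x C} is a function of type 'r \<Rightarrow> 'c \<Rightarrow> real, of which only
  the values on R x C are relevant.\<close>

definition mmul :: "'k set \<Rightarrow> ('r \<Rightarrow> 'k \<Rightarrow> real) \<Rightarrow> ('k \<Rightarrow> 'c \<Rightarrow> real) \<Rightarrow> 'r \<Rightarrow> 'c \<Rightarrow> real" where
  "mmul K A B = (\<lambda>i j. \<Sum>l\<in>K. A i l * B l j)"

definition mtr :: "('r \<Rightarrow> 'c \<Rightarrow> real) \<Rightarrow> 'c \<Rightarrow> 'r \<Rightarrow> real" where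
  "mtr A = (\<lambda>j i. A i j)"

definition mdiff :: "('r \<Rightarrow> 'c \<Rightarrow> real) \<Rightarrow> ('r \<Rightarrow> 'c \<Rightarrow> real) \<Rightarrow> 'r \<Rightarrow> 'c \<Rightarrow> real" where
  "mdiff A B = (\<lambda>i j. A i j - B i j)"

definition frob2 :: "'r set \<Rightarrow> 'c set \<Rightarrow> ('r \<Rightarrow> 'c \<Rightarrow> real) \<Rightarrow> real" where
  "frob2 R C A = (\<Sum>i\<in>R. \<Sum>j\<in>C. (A i j)\<^sup>2)"

definition orthonormal_cols :: "'r set \<Rightarrow> 'c set \<Rightarrow> ('r \<Rightarrow> 'c \<Rightarrow> real) \<Rightarrow> bool" where
  "orthonormal_cols R C Q \<longleftrightarrow>
     (\<forall>j\<in>C. \<forall>j'\<in>C. (\<Sum>i\<in>R. Q i j * Q i j') = (if j = j' then 1 else 0))"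

definition proj_err :: "'r set \<Rightarrow> 'c set \<Rightarrow> 'd set \<Rightarrow> ('r \<Rightarrow> 'c \<Rightarrow> real) \<Rightarrow> ('r \<Rightarrow> 'd \<Rightarrow> real) \<Rightarrow> real" where
  "proj_err R C D Q A = frob2 R D (mdiff (mmul R (mmul C Q (mtr Q)) A) A)"

text \<open>Block-diagonal matrix U_t = diag(Q_{t1}, Q_{t2}) in R^{t x (k_{t1}+k_{t2})},
  for t1 = t@[False], t2 = t@[True].\<close>
definition Ublock :: "(bool list \<Rightarrow> 'i set) \<Rightarrow> (bool list \<Rightarrow> nat) \<Rightarrow> (bool list \<Rightarrow> 'i \<Rightarrow> nat \<Rightarrow> real)
                       \<Rightarrow> bool list \<Rightarrow> 'i \<Rightarrow> nat \<Rightarrow> real" where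
  "Ublock lab kk Q t = (\<lambda>i a.
     if i \<in> lab (t @ [False]) \<and> a < kk (t @ [False]) then Q (t @ [False]) i a
     else if i \<in> lab (t @ [True]) \<and> kk (t @ [False]) \<le> a \<and> a < kk (t @ [False]) + kk (t @ [True])
       then Q (t @ [True]) i (a - kk (t @ [False]))
     else 0)"

text \<open>Row index set of the hatted matrices: t-hat (tagged Inl) for leaves,
  {0..<k_{t1}+k_{t2}} (tagged Inr) for non-leaves.\<close>
definition hrows :: "bool list set \<Rightarrow> (bool list \<Rightarrow> 'i set) \<Rightarrow> (bool list \<Rightarrow> nat) \<Rightarrow> bool list \<Rightarrow> ('i + nat) set" where
  "hrows T lab kk t =
     (if is_leaf T t then Inl ` lab t else Inr ` {..< kk (t @ [False]) + kk (t @ [True])})"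

end

theory Submission
  imports Defs
begin

text \<open>If Q has orthonormal columns, Pythagoras gives ||Q Q^T A - A||^2 = ||A||^2 - ||Q^T A||^2.
  At a non-leaf t with sons t1, t2 we have Q_t = U_t Qh_t and Vh_t = U_t^T V_t, hence
  Qh_t^T Vh_t M_t = Q_t^T V_t M_t. Nestedness says that the rows of V_t M_t in t1 form
  V_t1 M_t1 (likewise for t2), and the block structure of U_t splits ||V_t M_t||^2 and
  ||Vh_t M_t||^2 = ||U_t^T V_t M_t||^2 into the contributions of t1 and t2. So the error at t is
  the local error at t plus the errors at t1 and t2, and the identity follows by induction over
  the tree; orthonormality of every Q_t, which Pythagoras needs, follows by the same induction.\<close>

lemma mmul_assoc: "mmul K (mmul L A B) C = mmul L A (mmul K B C)"
  unfolding mmul_def by (simp add: sum_distrib_left sum_distrib_right mult.assoc sum.swap[of _ K L])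

lemma mtr_mmul: "mtr (mmul K A B) = mmul K (mtr B) (mtr A)"
  unfolding mmul_def mtr_def by (simp add: mult.commute)

lemma frob2_mmul_orthonormal_cols:
  assumes "finite C" and "orthonormal_cols R C Q"
  shows "frob2 R D (mmul C Q B) = frob2 C D B"
proof -
  have "(\<Sum>i\<in>R. (mmul C Q B i j)\<^sup>2) = (\<Sum>c\<in>C. (B c j)\<^sup>2)" for j
  proof -
    have "(\<Sum>i\<in>R. (mmul C Q B i j)\<^sup>2)
        = (\<Sum>c\<in>C. \<Sum>c'\<in>C. (B c j * B c' j) * (\<Sum>i\<in>R. Q i c * Q i c'))"
      by (simp add: mmul_def power2_eq_square sum_product sum_distrib_left mult_ac
            sum.swap[of _ R C] sum.swap[of _ R])
    also have "\<dots> = (\<Sum>c\<in>C. \<Sum>c'\<in>C. (B c j * B c' j) * (if c = c' then 1 else 0))"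
      using assms(2) unfolding orthonormal_cols_def by (intro sum.cong refl) simp
    also have "\<dots> = (\<Sum>c\<in>C. (B c j)\<^sup>2)"
      using assms(1) by (simp add: power2_eq_square if_distrib[of "\<lambda>x. _ * x"] sum.delta cong: if_cong)
    finally show ?thesis .
  qed
  then show ?thesis
    unfolding frob2_def by (subst (1 2) sum.swap) simp
qed

lemma proj_err_orthonormal_cols:
  assumes "finite C" and "orthonormal_cols R C Q"
  shows "proj_err R C D Q A = frob2 R D A - frob2 C D (mmul R (mtr Q) A)"
proof -
  define B where "B = mmul R (mtr Q) A"
  have PA: "mmul R (mmul C Q (mtr Q)) A = mmul C Q B"
    by (simp add: B_def mmul_assoc)
  have cross: "(\<Sum>i\<in>R. mmul C Q B i j * A i j) = (\<Sum>c\<in>C. (B c j)\<^sup>2)" for j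
    by (simp add: B_def mmul_def mtr_def power2_eq_square sum_distrib_left sum_distrib_right
          mult_ac sum.swap[of _ R C])
  have "proj_err R C D Q A
      = frob2 R D (mmul C Q B) - 2 * frob2 C D B + frob2 R D A"
    unfolding proj_err_def PA frob2_def mdiff_def
    by (subst (1 2 3 4) sum.swap)
      (simp add: power2_diff sum.distrib sum_subtractf sum_distrib_left cross[symmetric] mult_ac)
  then show ?thesis
    using frob2_mmul_orthonormal_cols[OF assms] by (simp add: B_def)
qed

lemma orthonormal_cols_reindex:
  assumes "inj_on f R"
  shows "orthonormal_cols (f ` R) C Q \<longleftrightarrow> orthonormal_cols R C (\<lambda>i. Q (f i))"
  using assms by (simp add: orthonormal_cols_def sum.reindex)

lemma orthonormal_cols_mmul:
  assumes "finite K" and U: "orthonormal_cols R K U" and W: "orthonormal_cols K C W"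
  shows "orthonormal_cols R C (mmul K U W)"
  unfolding orthonormal_cols_def
proof (intro ballI)
  fix j j' assume "j \<in> C" "j' \<in> C"
  have "(\<Sum>i\<in>R. mmul K U W i j * mmul K U W i j')
      = (\<Sum>a\<in>K. \<Sum>a'\<in>K. (W a j * W a' j') * (\<Sum>i\<in>R. U i a * U i a'))"
    by (simp add: mmul_def sum_product sum_distrib_left mult_ac sum.swap[of _ R K] sum.swap[of _ R])
  also have "\<dots> = (\<Sum>a\<in>K. \<Sum>a'\<in>K. (W a j * W a' j') * (if a = a' then 1 else 0))"
    using U unfolding orthonormal_cols_def by (intro sum.cong refl) simp
  also have "\<dots> = (\<Sum>a\<in>K. W a j * W a j')"
    using assms(1) by (simp add: if_distrib[of "\<lambda>x. _ * x"] sum.delta cong: if_cong)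
  also have "\<dots> = (if j = j' then 1 else 0)"
    using W \<open>j \<in> C\<close> \<open>j' \<in> C\<close> unfolding orthonormal_cols_def by blast
  finally show "(\<Sum>i\<in>R. mmul K U W i j * mmul K U W i j') = (if j = j' then 1 else 0)" .
qed

lemma orthonormal_cols_cong:
  assumes "\<And>i j. i \<in> R \<Longrightarrow> j \<in> C \<Longrightarrow> Q' i j = Q i j"
  shows "orthonormal_cols R C Q' \<longleftrightarrow> orthonormal_cols R C Q"
  using assms by (simp add: orthonormal_cols_def)

lemma proj_err_reindex:
  assumes "inj_on f R"
    and "\<And>i j. i \<in> R \<Longrightarrow> j \<in> C \<Longrightarrow> Q' (f i) j = Q i j"
    and "\<And>i j. i \<in> R \<Longrightarrow> j \<in> D \<Longrightarrow> A' (f i) j = A i j"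
  shows "proj_err (f ` R) C D Q' A' = proj_err R C D Q A"
  using assms
  by (simp add: proj_err_def frob2_def mdiff_def mmul_def mtr_def sum.reindex cong: sum.cong)

lemma sum_lessThan_add: "(\<Sum>a<m + n. f a) = (\<Sum>a<m. f a) + (\<Sum>c<n. f (m + c))"
  for f :: "nat \<Rightarrow> 'a::comm_monoid_add"
  by (induction n) (simp_all add: add.assoc)

context
  fixes lab :: "bool list \<Rightarrow> 'i set" and t :: "bool list"
  assumes lab_split: "lab t = lab (t @ [False]) \<union> lab (t @ [True])"
    and lab_disjoint: "lab (t @ [False]) \<inter> lab (t @ [True]) = {}"
    and finite_lab_sons: "finite (lab (t @ [False]))" "finite (lab (t @ [True]))"
begin

lemma sum_lab_split:
  "(\<Sum>i\<in>lab t. f i) = (\<Sum>i\<in>lab (t @ [False]). f i) + (\<Sum>i\<in>lab (t @ [True]). f i)"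
  unfolding lab_split using finite_lab_sons lab_disjoint by (rule sum.union_disjoint)

lemma Ublock_left:
  "i \<in> lab (t @ [False]) \<Longrightarrow>
    Ublock lab kk Q t i a = (if a < kk (t @ [False]) then Q (t @ [False]) i a else 0)"
  using lab_disjoint by (auto simp: Ublock_def)

lemma Ublock_right:
  "i \<in> lab (t @ [True]) \<Longrightarrow> a < kk (t @ [False]) + kk (t @ [True]) \<Longrightarrow>
    Ublock lab kk Q t i a =
      (if kk (t @ [False]) \<le> a then Q (t @ [True]) i (a - kk (t @ [False])) else 0)"
  using lab_disjoint by (auto simp: Ublock_def)

lemma mmul_mtr_Ublock_left:
  assumes "a < kk (t @ [False])"
  shows "mmul (lab t) (mtr (Ublock lab kk Q t)) X a j
       = mmul (lab (t @ [False])) (mtr (Q (t @ [False]))) X a j"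
  using assms by (simp add: mmul_def mtr_def sum_lab_split Ublock_left Ublock_right)

lemma mmul_mtr_Ublock_right:
  assumes "c < kk (t @ [True])"
  shows "mmul (lab t) (mtr (Ublock lab kk Q t)) X (kk (t @ [False]) + c) j
       = mmul (lab (t @ [True])) (mtr (Q (t @ [True]))) X c j"
  using assms by (simp add: mmul_def mtr_def sum_lab_split Ublock_left Ublock_right)

lemma frob2_mmul_mtr_Ublock:
  "frob2 {..<kk (t @ [False]) + kk (t @ [True])} D (mmul (lab t) (mtr (Ublock lab kk Q t)) X)
   = frob2 {..<kk (t @ [False])} D (mmul (lab (t @ [False])) (mtr (Q (t @ [False]))) X)
   + frob2 {..<kk (t @ [True])} D (mmul (lab (t @ [True])) (mtr (Q (t @ [True]))) X)"
  unfolding frob2_def sum_lessThan_add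
  by (simp add: mmul_mtr_Ublock_left mmul_mtr_Ublock_right)

lemma orthonormal_cols_Ublock:
  assumes "orthonormal_cols (lab (t @ [False])) {..<kk (t @ [False])} (Q (t @ [False]))"
    and "orthonormal_cols (lab (t @ [True])) {..<kk (t @ [True])} (Q (t @ [True]))"
  shows "orthonormal_cols (lab t) {..<kk (t @ [False]) + kk (t @ [True])} (Ublock lab kk Q t)"
  unfolding orthonormal_cols_def
proof (intro ballI)
  fix a a'
  assume "a \<in> {..<kk (t @ [False]) + kk (t @ [True])}" and "a' \<in> {..<kk (t @ [False]) + kk (t @ [True])}"
  then show "(\<Sum>i\<in>lab t. Ublock lab kk Q t i a * Ublock lab kk Q t i a') = (if a = a' then 1 else 0)"
    using assms unfolding orthonormal_cols_def
    by (cases "a < kk (t @ [False])"; cases "a' < kk (t @ [False])")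
      (auto simp: sum_lab_split Ublock_left Ublock_right less_diff_conv2)
qed

end

lemma sons_star_prefix: "s \<in> sons_star T t \<Longrightarrow> prefix t s"
  by (induction rule: sons_star.induct) (auto simp: sons_def prefix_def)

lemma sons_star_in_tree: "s \<in> sons_star T t \<Longrightarrow> t \<in> T \<Longrightarrow> s \<in> T"
  by (induction rule: sons_star.induct) (auto simp: sons_def)

lemma sons_star_trans: "s \<in> sons_star T r \<Longrightarrow> r \<in> sons_star T t \<Longrightarrow> s \<in> sons_star T t"
  by (induction s rule: sons_star.induct) (auto intro: sons_star.step)

lemma sons_star_unfold: "sons_star T t = insert t (\<Union>s\<in>sons T t. sons_star T s)"
proof
  show "sons_star T t \<subseteq> insert t (\<Union>s\<in>sons T t. sons_star T s)"
  proof
    fix x assume "x \<in> sons_star T t"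
    then show "x \<in> insert t (\<Union>s\<in>sons T t. sons_star T s)"
      by induction (auto intro: sons_star.intros)
  qed
  show "insert t (\<Union>s\<in>sons T t. sons_star T s) \<subseteq> sons_star T t"
    using sons_star_trans sons_star.step[OF sons_star.self] by (auto intro: sons_star.self)
qed

lemma sons_star_leaf: "is_leaf T t \<Longrightarrow> sons_star T t = {t}"
  by (subst sons_star_unfold) (simp add: is_leaf_def)

lemma finite_tree_induct[consumes 2, case_names sons]:
  assumes "finite T" and "t \<in> T"
    and step: "\<And>t. t \<in> T \<Longrightarrow> (\<And>s. s \<in> sons T t \<Longrightarrow> P s) \<Longrightarrow> P t"
  shows "P t"
  using assms(2)
proof (induction "Max (length ` T) - length t" arbitrary: t rule: less_induct)
  case less
  show ?case
  proof (rule step[OF less.prems])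
    fix s assume s: "s \<in> sons T t"
    then obtain b where "s \<in> T" and "s = t @ [b]"
      by (auto simp: sons_def)
    moreover have "length s \<le> Max (length ` T)"
      using \<open>s \<in> T\<close> \<open>finite T\<close> by simp
    ultimately show "P s"
      using less.hyps by simp
  qed
qed

context
  fixes I :: "'i set" and T :: "bool list set" and lab :: "bool list \<Rightarrow> 'i set"
  assumes tree: "binary_cluster_tree I T lab"
begin

lemma binary_cluster_tree_finite: "finite T"
  using tree unfolding binary_cluster_tree_def by blast

lemma binary_cluster_tree_sons:
  assumes "t \<in> T" and "\<not> is_leaf T t"
  shows "sons T t = {t @ [False], t @ [True]}"
proof -
  obtain b where "t @ [b] \<in> T"
    using assms(2) by (auto simp: is_leaf_def sons_def)
  moreover have "(t @ [False] \<in> T) = (t @ [True] \<in> T)"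
    using tree assms(1) unfolding binary_cluster_tree_def by blast
  ultimately have "t @ [False] \<in> T" and "t @ [True] \<in> T"
    by (cases b; simp)+
  then show ?thesis
    unfolding sons_def by (auto simp: all_bool_eq)
qed

lemma binary_cluster_tree_sons_in_tree:
  assumes "t \<in> T" and "\<not> is_leaf T t"
  shows "t @ [False] \<in> T" and "t @ [True] \<in> T"
  using binary_cluster_tree_sons[OF assms] by (auto simp: sons_def)

lemma binary_cluster_tree_lab_split:
  assumes "t \<in> T" and "\<not> is_leaf T t"
  shows "lab t = lab (t @ [False]) \<union> lab (t @ [True])"
    and "lab (t @ [False]) \<inter> lab (t @ [True]) = {}"
proof -
  have "t @ [False] \<in> T"
    using binary_cluster_tree_sons_in_tree[OF assms] by simp
  then show "lab t = lab (t @ [False]) \<union> lab (t @ [True])"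
    and "lab (t @ [False]) \<inter> lab (t @ [True]) = {}"
    using tree assms(1) unfolding binary_cluster_tree_def by blast+
qed

lemma binary_cluster_tree_lab_subset: "t \<in> T \<Longrightarrow> lab t \<subseteq> I"
proof (induction t rule: rev_induct)
  case Nil
  then show ?case
    using tree unfolding binary_cluster_tree_def by blast
next
  case (snoc b p)
  have p: "p \<in> T"
    using snoc.prems tree unfolding binary_cluster_tree_def by blast
  have not_leaf: "\<not> is_leaf T p"
    using snoc.prems by (auto simp: is_leaf_def sons_def)
  show ?case
    using snoc.IH[OF p] binary_cluster_tree_lab_split(1)[OF p not_leaf] by (cases b) auto
qed

lemma binary_cluster_tree_finite_lab: "t \<in> T \<Longrightarrow> finite (lab t)"
proof -
  have "finite I"
    using tree unfolding binary_cluster_tree_def by blast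
  then show "t \<in> T \<Longrightarrow> finite (lab t)"
    using finite_subset[OF binary_cluster_tree_lab_subset] by blast
qed

lemma sum_sons_star_node:
  assumes "t \<in> T" and "\<not> is_leaf T t"
  shows "(\<Sum>s\<in>sons_star T t. f s)
       = f t + (\<Sum>s\<in>sons_star T (t @ [False]). f s) + (\<Sum>s\<in>sons_star T (t @ [True]). f s)"
proof -
  have sons: "sons T t = {t @ [False], t @ [True]}" and sons_in_T: "sons T t \<subseteq> T"
    using binary_cluster_tree_sons[OF assms] by (auto simp: sons_def)
  have fin: "finite (sons_star T s)" if "s \<in> sons T t" for s
    using sons_star_in_tree[of _ T s] sons_in_T that
    by (intro finite_subset[OF _ binary_cluster_tree_finite]) blast
  have "t \<notin> sons_star T (t @ [b])" for b
    using sons_star_prefix prefix_length_le by fastforce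
  moreover have "sons_star T (t @ [False]) \<inter> sons_star T (t @ [True]) = {}"
  proof -
    have "\<not> prefix (t @ [False]) (t @ [True])" and "\<not> prefix (t @ [True]) (t @ [False])"
      by simp_all
    then show ?thesis
      using sons_star_prefix prefix_same_cases by blast
  qed
  ultimately show ?thesis
    using fin sons by (subst sons_star_unfold) (simp add: sum.union_disjoint add.assoc)
qed

end

lemma binary_cluster_tree_induct[consumes 2, case_names leaf node]:
  assumes tree: "binary_cluster_tree I T lab" and "t \<in> T"
    and "\<And>t. t \<in> T \<Longrightarrow> is_leaf T t \<Longrightarrow> P t"
    and "\<And>t. t \<in> T \<Longrightarrow> \<not> is_leaf T t \<Longrightarrow> P (t @ [False]) \<Longrightarrow> P (t @ [True]) \<Longrightarrow> P t"
  shows "P t"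
  using binary_cluster_tree_finite[OF tree] assms(2)
proof (induction t rule: finite_tree_induct)
  case (sons t)
  then show ?case
    using assms(3,4) binary_cluster_tree_sons[OF tree] by (cases "is_leaf T t") auto
qed

locale orthogonalised_cluster_basis =
  fixes I :: "'i set" and T :: "bool list set" and lab :: "bool list \<Rightarrow> 'i set"
    and k :: nat and V :: "bool list \<Rightarrow> 'i \<Rightarrow> nat \<Rightarrow> real"
    and E :: "bool list \<Rightarrow> nat \<Rightarrow> nat \<Rightarrow> real"
    and kk :: "bool list \<Rightarrow> nat"
    and Q :: "bool list \<Rightarrow> 'i \<Rightarrow> nat \<Rightarrow> real"
    and Qh Vh :: "bool list \<Rightarrow> 'i + nat \<Rightarrow> nat \<Rightarrow> real"
  assumes tree: "binary_cluster_tree I T lab"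
    and nested: "\<And>t t' i j. t \<in> T \<Longrightarrow> t' \<in> sons T t \<Longrightarrow> i \<in> lab t' \<Longrightarrow> j < k \<Longrightarrow>
                   V t i j = (\<Sum>l<k. V t' i l * E t' l j)"
    and leaf_Q: "\<And>t. t \<in> T \<Longrightarrow> is_leaf T t \<Longrightarrow> orthonormal_cols (lab t) {..<kk t} (Q t)"
    and leaf_Qh: "\<And>t i j. t \<in> T \<Longrightarrow> is_leaf T t \<Longrightarrow> i \<in> lab t \<Longrightarrow> j < kk t \<Longrightarrow>
                   Qh t (Inl i) j = Q t i j"
    and leaf_Vh: "\<And>t i j. t \<in> T \<Longrightarrow> is_leaf T t \<Longrightarrow> i \<in> lab t \<Longrightarrow> j < k \<Longrightarrow>
                   Vh t (Inl i) j = V t i j"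
    and node_Vh: "\<And>t a j. t \<in> T \<Longrightarrow> \<not> is_leaf T t \<Longrightarrow>
                   a < kk (t @ [False]) + kk (t @ [True]) \<Longrightarrow> j < k \<Longrightarrow>
                   Vh t (Inr a) j = (\<Sum>i\<in>lab t. Ublock lab kk Q t i a * V t i j)"
    and node_Qh: "\<And>t. t \<in> T \<Longrightarrow> \<not> is_leaf T t \<Longrightarrow>
                   orthonormal_cols (Inr ` {..< kk (t @ [False]) + kk (t @ [True])}) {..<kk t} (Qh t)"
    and node_Q: "\<And>t i j. t \<in> T \<Longrightarrow> \<not> is_leaf T t \<Longrightarrow> i \<in> lab t \<Longrightarrow> j < kk t \<Longrightarrow>
                   Q t i j = (\<Sum>a < kk (t @ [False]) + kk (t @ [True]).
                                Ublock lab kk Q t i a * Qh t (Inr a) j)"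
begin

definition basis_err :: "nat \<Rightarrow> (bool list \<Rightarrow> nat \<Rightarrow> nat \<Rightarrow> real) \<Rightarrow> bool list \<Rightarrow> real" where
  "basis_err N M t = proj_err (lab t) {..<kk t} {..<N} (Q t) (mmul {..<k} (V t) (M t))"

definition local_err :: "nat \<Rightarrow> (bool list \<Rightarrow> nat \<Rightarrow> nat \<Rightarrow> real) \<Rightarrow> bool list \<Rightarrow> real" where
  "local_err N M t =
     proj_err (hrows T lab kk t) {..<kk t} {..<N} (Qh t) (mmul {..<k} (Vh t) (M t))"

lemma node_lab_split:
  assumes "t \<in> T" and "\<not> is_leaf T t"
  shows "lab t = lab (t @ [False]) \<union> lab (t @ [True])"
    and "lab (t @ [False]) \<inter> lab (t @ [True]) = {}"
    and "finite (lab (t @ [False]))" and "finite (lab (t @ [True]))"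
  using binary_cluster_tree_lab_split[OF tree assms]
    binary_cluster_tree_finite_lab[OF tree binary_cluster_tree_sons_in_tree(1)[OF tree assms]]
    binary_cluster_tree_finite_lab[OF tree binary_cluster_tree_sons_in_tree(2)[OF tree assms]]
  by auto

lemma Q_orthonormal_cols: "t \<in> T \<Longrightarrow> orthonormal_cols (lab t) {..<kk t} (Q t)"
  using tree
proof (induction t rule: binary_cluster_tree_induct)
  case (leaf t)
  then show ?case by (rule leaf_Q)
next
  case (node t)
  let ?K = "{..<kk (t @ [False]) + kk (t @ [True])}"
  have "orthonormal_cols (lab t) {..<kk t} (mmul ?K (Ublock lab kk Q t) (\<lambda>a. Qh t (Inr a)))"
  proof (rule orthonormal_cols_mmul)
    show "orthonormal_cols (lab t) ?K (Ublock lab kk Q t)"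
      using node by (intro orthonormal_cols_Ublock[OF node_lab_split[OF node(1,2)]])
    show "orthonormal_cols ?K {..<kk t} (\<lambda>a. Qh t (Inr a))"
      using node_Qh[OF node(1,2)] by (simp add: orthonormal_cols_reindex)
  qed simp
  then show ?case
    using node_Q[OF node(1,2)] by (subst orthonormal_cols_cong) (auto simp: mmul_def)
qed

lemma basis_err_pythagoras:
  "t \<in> T \<Longrightarrow> basis_err N M t = frob2 (lab t) {..<N} (mmul {..<k} (V t) (M t))
     - frob2 {..<kk t} {..<N} (mmul (lab t) (mtr (Q t)) (mmul {..<k} (V t) (M t)))"
  unfolding basis_err_def by (simp add: proj_err_orthonormal_cols Q_orthonormal_cols)

lemma mmul_restrict_son:
  assumes "t \<in> T" and "s \<in> sons T t" and "i \<in> lab s" and "j < N"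
    and M_son: "\<And>l. l < k \<Longrightarrow> M s l j = (\<Sum>m<k. E s l m * M t m j)"
  shows "mmul {..<k} (V t) (M t) i j = mmul {..<k} (V s) (M s) i j"
proof -
  have "mmul {..<k} (V t) (M t) i j = mmul {..<k} (mmul {..<k} (V s) (E s)) (M t) i j"
    using nested[OF assms(1-3)] by (simp add: mmul_def)
  also have "\<dots> = mmul {..<k} (V s) (mmul {..<k} (E s) (M t)) i j"
    by (simp add: mmul_assoc)
  also have "\<dots> = mmul {..<k} (V s) (M s) i j"
    using M_son by (simp add: mmul_def)
  finally show ?thesis .
qed

lemma local_err_leaf:
  assumes "t \<in> T" and "is_leaf T t"
  shows "local_err N M t = basis_err N M t"
proof -
  have "hrows T lab kk t = Inl ` lab t"
    using assms(2) by (simp add: hrows_def)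
  then show ?thesis
    unfolding local_err_def basis_err_def
    by (simp only:) (rule proj_err_reindex, auto simp: leaf_Qh[OF assms] leaf_Vh[OF assms] mmul_def)
qed

lemma local_err_node:
  fixes M :: "bool list \<Rightarrow> nat \<Rightarrow> nat \<Rightarrow> real"
  assumes "t \<in> T" and "\<not> is_leaf T t"
  defines "A \<equiv> mmul {..<k} (V t) (M t)"
  shows "local_err N M t =
      frob2 {..<kk (t @ [False]) + kk (t @ [True])} {..<N} (mmul (lab t) (mtr (Ublock lab kk Q t)) A)
    - frob2 {..<kk t} {..<N} (mmul (lab t) (mtr (Q t)) A)"
proof -
  let ?K = "{..<kk (t @ [False]) + kk (t @ [True])}"
  let ?U = "Ublock lab kk Q t"
  define W where "W a j = Qh t (Inr a) j" for a j
  have Vh_A: "mmul {..<k} (Vh t) (M t) (Inr a) j = mmul (lab t) (mtr ?U) A a j"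
    if "a \<in> ?K" for a j
  proof -
    have "mmul {..<k} (Vh t) (M t) (Inr a) j = mmul {..<k} (mmul (lab t) (mtr ?U) (V t)) (M t) a j"
      using that node_Vh[OF assms(1,2)] by (simp add: mmul_def mtr_def)
    then show ?thesis
      by (simp add: A_def mmul_assoc)
  qed
  have Qh_Q: "mmul (Inr ` ?K) (mtr (Qh t)) (mmul {..<k} (Vh t) (M t)) c j
      = mmul (lab t) (mtr (Q t)) A c j" if "c < kk t" for c j
  proof -
    have "mmul (Inr ` ?K) (mtr (Qh t)) (mmul {..<k} (Vh t) (M t)) c j
        = (\<Sum>a\<in>?K. W a c * mmul {..<k} (Vh t) (M t) (Inr a) j)"
      by (simp add: mmul_def[of "Inr ` ?K"] mtr_def W_def sum.reindex)
    also have "\<dots> = mmul ?K (mtr W) (mmul (lab t) (mtr ?U) A) c j"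
      by (simp add: mmul_def[of ?K] mtr_def Vh_A)
    also have "\<dots> = mmul (lab t) (mtr (mmul ?K ?U W)) A c j"
      by (simp add: mmul_assoc mtr_mmul)
    also have "\<dots> = mmul (lab t) (mtr (Q t)) A c j"
      using node_Q[OF assms(1,2) _ that] by (simp add: mmul_def mtr_def W_def)
    finally show ?thesis .
  qed
  have "local_err N M t = frob2 (Inr ` ?K) {..<N} (mmul {..<k} (Vh t) (M t))
      - frob2 {..<kk t} {..<N} (mmul (Inr ` ?K) (mtr (Qh t)) (mmul {..<k} (Vh t) (M t)))"
    unfolding local_err_def hrows_def
    using assms(2) node_Qh[OF assms(1,2)] by (simp add: proj_err_orthonormal_cols)
  then show ?thesis
    by (simp add: frob2_def sum.reindex Vh_A Qh_Q)
qed

lemma basis_err_node: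
  assumes "t \<in> T" and "\<not> is_leaf T t"
    and M_sons: "\<And>s l j. s \<in> sons T t \<Longrightarrow> l < k \<Longrightarrow> j < N \<Longrightarrow>
                  M s l j = (\<Sum>m<k. E s l m * M t m j)"
  shows "basis_err N M t = local_err N M t + basis_err N M (t @ [False]) + basis_err N M (t @ [True])"
proof -
  define A where "A s = mmul {..<k} (V s) (M s)" for s
  note split = node_lab_split[OF assms(1,2)]
  have A_son: "A t i j = A (t @ [b]) i j" if "i \<in> lab (t @ [b])" and "j < N" for b i j
  proof -
    have "t @ [b] \<in> sons T t"
      using binary_cluster_tree_sons[OF tree assms(1,2)] by (cases b) auto
    then show ?thesis
      unfolding A_def using that M_sons by (intro mmul_restrict_son[OF assms(1)])
  qed
  have norm_split: "frob2 (lab t) {..<N} (A t)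
      = frob2 (lab (t @ [False])) {..<N} (A (t @ [False]))
      + frob2 (lab (t @ [True])) {..<N} (A (t @ [True]))"
    unfolding frob2_def sum_lab_split[OF split] by (simp add: A_son)
  have proj_split: "frob2 {..<kk (t @ [False]) + kk (t @ [True])} {..<N}
        (mmul (lab t) (mtr (Ublock lab kk Q t)) (A t))
      = frob2 {..<kk (t @ [False])} {..<N}
          (mmul (lab (t @ [False])) (mtr (Q (t @ [False]))) (A (t @ [False])))
      + frob2 {..<kk (t @ [True])} {..<N}
          (mmul (lab (t @ [True])) (mtr (Q (t @ [True]))) (A (t @ [True])))"
    unfolding frob2_mmul_mtr_Ublock[OF split] by (simp add: frob2_def mmul_def A_son)
  show ?thesis
    using basis_err_pythagoras[OF assms(1)] local_err_node[OF assms(1,2)]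
      basis_err_pythagoras[OF binary_cluster_tree_sons_in_tree(1)[OF tree assms(1,2)]]
      basis_err_pythagoras[OF binary_cluster_tree_sons_in_tree(2)[OF tree assms(1,2)]]
      norm_split proj_split
    by (simp add: A_def)
qed

lemma basis_err_eq_sum_local_err:
  assumes "t \<in> T"
    and "\<And>r s l j. r \<in> sons_star T t \<Longrightarrow> s \<in> sons T r \<Longrightarrow> l < k \<Longrightarrow> j < N \<Longrightarrow>
           M s l j = (\<Sum>m<k. E s l m * M r m j)"
  shows "basis_err N M t = (\<Sum>r\<in>sons_star T t. local_err N M r)"
  using tree assms
proof (induction t rule: binary_cluster_tree_induct)
  case (leaf t)
  then show ?case
    by (simp add: sons_star_leaf local_err_leaf)
next
  case (node t)
  have "r \<in> sons_star T (t @ [b]) \<Longrightarrow> r \<in> sons_star T t" for r b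
    using binary_cluster_tree_sons[OF tree node(1,2)]
    by (auto intro: sons_star_trans sons_star.step[OF sons_star.self])
  then show ?case
    using node sons_star.self
    by (simp add: basis_err_node sum_sons_star_node[OF tree])
qed

end

theorem mainTheorem4:
  fixes I :: "'i set" and T :: "bool list set" and lab :: "bool list \<Rightarrow> 'i set"
    and k :: nat and V :: "bool list \<Rightarrow> 'i \<Rightarrow> nat \<Rightarrow> real"
    and E :: "bool list \<Rightarrow> nat \<Rightarrow> nat \<Rightarrow> real"
    and kk :: "bool list \<Rightarrow> nat"
    and Q :: "bool list \<Rightarrow> 'i \<Rightarrow> nat \<Rightarrow> real"
    and Qh Vh :: "bool list \<Rightarrow> 'i + nat \<Rightarrow> nat \<Rightarrow> real"
    and t0 :: "bool list" and N :: nat and M :: "bool list \<Rightarrow> nat \<Rightarrow> nat \<Rightarrow> real"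
  assumes tree: "binary_cluster_tree I T lab"
    and nested: "\<And>t t' i j. t \<in> T \<Longrightarrow> t' \<in> sons T t \<Longrightarrow> i \<in> lab t' \<Longrightarrow> j < k \<Longrightarrow>
                   V t i j = (\<Sum>l<k. V t' i l * E t' l j)"
    and leaf_Q: "\<And>t. t \<in> T \<Longrightarrow> is_leaf T t \<Longrightarrow> orthonormal_cols (lab t) {..<kk t} (Q t)"
    and leaf_Qh: "\<And>t i j. t \<in> T \<Longrightarrow> is_leaf T t \<Longrightarrow> i \<in> lab t \<Longrightarrow> j < kk t \<Longrightarrow>
                   Qh t (Inl i) j = Q t i j"
    and leaf_Vh: "\<And>t i j. t \<in> T \<Longrightarrow> is_leaf T t \<Longrightarrow> i \<in> lab t \<Longrightarrow> j < k \<Longrightarrow>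
                   Vh t (Inl i) j = V t i j"
    and node_Vh: "\<And>t a j. t \<in> T \<Longrightarrow> \<not> is_leaf T t \<Longrightarrow>
                   a < kk (t @ [False]) + kk (t @ [True]) \<Longrightarrow> j < k \<Longrightarrow>
                   Vh t (Inr a) j = (\<Sum>i\<in>lab t. Ublock lab kk Q t i a * V t i j)"
    and node_Qh: "\<And>t. t \<in> T \<Longrightarrow> \<not> is_leaf T t \<Longrightarrow>
                   orthonormal_cols (Inr ` {..< kk (t @ [False]) + kk (t @ [True])}) {..<kk t} (Qh t)"
    and node_Q: "\<And>t i j. t \<in> T \<Longrightarrow> \<not> is_leaf T t \<Longrightarrow> i \<in> lab t \<Longrightarrow> j < kk t \<Longrightarrow>
                   Q t i j = (\<Sum>a < kk (t @ [False]) + kk (t @ [True]).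
                                Ublock lab kk Q t i a * Qh t (Inr a) j)"
    and t0: "t0 \<in> T"
    and M: "\<And>r r' l j. r \<in> sons_star T t0 \<Longrightarrow> r' \<in> sons T r \<Longrightarrow> l < k \<Longrightarrow> j < N \<Longrightarrow>
                   M r' l j = (\<Sum>m<k. E r' l m * M r m j)"
  shows "proj_err (lab t0) {..<kk t0} {..<N} (Q t0) (mmul {..<k} (V t0) (M t0))
       = (\<Sum>r\<in>sons_star T t0.
            proj_err (hrows T lab kk r) {..<kk r} {..<N} (Qh r) (mmul {..<k} (Vh r) (M r)))"
proof -
  interpret orthogonalised_cluster_basis I T lab k V E kk Q Qh Vh
    by unfold_locales (fact tree nested leaf_Q leaf_Qh leaf_Vh node_Vh node_Qh node_Q)+
  show ?thesis
    using basis_err_eq_sum_local_err[OF t0 M] by (simp add: basis_err_def local_err_def)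
qed

end
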